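(* Let $(M,g)$ be a Riemannian manifold of dimension $n$, with $\mathcal{T}M$, $V$, $\xi_1,\xi_2$, $\omega^1,\omega^2$, $f$ as in the context (on the open set where $F^2+K^2>0$). Then $(f,(\xi_a),(\omega^a))_{a=1,2}$ is a framed $f(3,1)$-structure on $V$, namely: (i) $\omega^a(\xi_b)=\delta^a_b$, $f(\xi_a)=0$ and $\omega^a\circ f=0$ for $a,b\in\{1,2\}$; (ii) $f^2(X)=-X+\omega^1(X)\xi_1+\omega^2(X)\xi_2$ for every $X\in\Gamma(V)$; (iii) $f$ has rank $2n-2$ and $f^3+f=0$.
   Context: Let $M$ be an $n$-dimensional smooth manifold with a Riemannian metric $g=(g_{ij})$, with inverse matrix $(g^{ij})$; summation convention is used. The big-tangent manifold $\mathcal{T}M$ is the total space of $TM\oplus T^*M\to M$, with local coordinates $(x^i,y^i,p_i)$ (the point $y^i\frac{\partial}{\partial x^i}|_x+p_i\,dx^i|_x$). The vertical bundle $V\subset T\mathcal{T}M$ is tangent to the fibres, locally spanned by $\{\frac{\partial}{\partial y^i},\frac{\partial}{\partial p_i}\}$. Put $y_i=g_{ij}y^j$, $p^i=g^{ij}p_j$, $F^2=g_{ij}y^iy^j$, $K^2=g^{ij}p_ip_j$; all objects are considered where $F^2+K^2>0$. $\phi:V\to V$ is given by $\phi(\frac{\partial}{\partial y^i})=-g_{ij}\frac{\partial}{\partial p_j}$, $\phi(\frac{\partial}{\partial p_i})=g^{ij}\frac{\partial}{\partial y^j}$. $\xi_2=\frac{1}{\sqrt{F^2+K^2}}(y^i\frac{\partial}{\partial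 y^i}+p_i\frac{\partial}{\partial p_i})$, $\xi_1=\frac{1}{\sqrt{F^2+K^2}}(p^i\frac{\partial}{\partial y^i}-y_i\frac{\partial}{\partial p_i})$. $\omega^1,\omega^2\in\Gamma(V^* )$: $\omega^1(\frac{\partial}{\partial y^i})=\frac{p_i}{\sqrt{F^2+K^2}}$, $\omega^1(\frac{\partial}{\partial p_i})=-\frac{y^i}{\sqrt{F^2+K^2}}$, $\omega^2(\frac{\partial}{\partial y^i})=\frac{y_i}{\sqrt{F^2+K^2}}$, $\omega^2(\frac{\partial}{\partial p_i})=\frac{p^i}{\sqrt{F^2+K^2}}$. $f:V\to V$ is defined by $f(X)=\phi(X)-\omega^2(X)\xi_1+\omega^1(X)\xi_2$. *)

theory Defs
  imports "HOL-Analysis.Analysis"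
begin

text \<open>Pointwise (fibrewise) model of the vertical bundle V of the big-tangent
manifold at a point (x,y,p).  A vertical vector
X = a^i d/dy^i + b_i d/dp_i is represented by the pair (a,b).\<close>

type_synonym 'n vert = "(real ^ 'n) \<times> (real ^ 'n)"

definition riem_metric :: "real ^ 'n ^ 'n \<Rightarrow> bool" where
  "riem_metric g \<longleftrightarrow> transpose g = g \<and> (\<forall>v. v \<noteq> 0 \<longrightarrow> v \<bullet> (g *v v) > 0)"

definition Fsq :: "real ^ 'n ^ 'n \<Rightarrow> real ^ 'n \<Rightarrow> real" where
  "Fsq g y = y \<bullet> (g *v y)"

definition Ksq :: "real ^ 'n ^ 'n \<Rightarrow> real ^ 'n \<Rightarrow> real" where
  "Ksq g p = p \<bullet> (matrix_inv g *v p)"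

definition nrm :: "real ^ 'n ^ 'n \<Rightarrow> real ^ 'n \<Rightarrow> real ^ 'n \<Rightarrow> real" where
  "nrm g y p = sqrt (Fsq g y + Ksq g p)"

definition phi :: "real ^ 'n ^ 'n \<Rightarrow> 'n vert \<Rightarrow> 'n vert" where
  "phi g X = (matrix_inv g *v snd X, - (g *v fst X))"

definition xi :: "real ^ 'n ^ 'n \<Rightarrow> real ^ 'n \<Rightarrow> real ^ 'n \<Rightarrow> nat \<Rightarrow> 'n vert" where
  "xi g y p a =
     (if a = 1 then (inverse (nrm g y p) *\<^sub>R (matrix_inv g *v p), inverse (nrm g y p) *\<^sub>R (- (g *v y)))
      else (inverse (nrm g y p) *\<^sub>R y, inverse (nrm g y p) *\<^sub>R p))"

definition omega :: "real ^ 'n ^ 'n \<Rightarrow> real ^ 'n \<Rightarrow> real ^ 'n \<Rightarrow> nat \<Rightarrow> 'n vert \<Rightarrow> real" where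
  "omega g y p a X =
     (if a = 1 then (fst X \<bullet> p - snd X \<bullet> y) / nrm g y p
      else (fst X \<bullet> (g *v y) + snd X \<bullet> (matrix_inv g *v p)) / nrm g y p)"

definition fstr :: "real ^ 'n ^ 'n \<Rightarrow> real ^ 'n \<Rightarrow> real ^ 'n \<Rightarrow> 'n vert \<Rightarrow> 'n vert" where
  "fstr g y p X = phi g X - omega g y p 2 X *\<^sub>R xi g y p 1 + omega g y p 1 X *\<^sub>R xi g y p 2"

end

theory Submission
  imports Defs
begin

text \<open>The identities (i)--(ii) are pointwise linear algebra: the symmetry of \<open>g\<close> and of its
inverse gives \<open>\<phi>\<^sup>2 = -id\<close>, \<open>\<phi> \<xi>\<^sub>1 = -\<xi>\<^sub>2\<close>, \<open>\<phi> \<xi>\<^sub>2 = \<xi>\<^sub>1\<close>, \<open>\<omega>\<^sup>1 \<circ> \<phi> = \<omega>\<^sup>2\<close> and \<open>\<omega>\<^sup>2 \<circ> \<phi> = -\<omega>\<^sup>1\<close>,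
from which everything else is a short computation. Part (iii) holds for any framed
\<open>f\<close>-structure with two dual frames: by (ii) the image of \<open>f\<close> is the common kernel of
\<open>\<omega>\<^sup>1, \<omega>\<^sup>2\<close>, and representing these independent functionals by vectors shows that this
kernel has codimension 2 in the \<open>2n\<close>-dimensional fibre.\<close>

lemma framed_f_cube:
  assumes "linear f" "f \<xi>\<^sub>1 = 0" "f \<xi>\<^sub>2 = 0"
    and "\<And>X. f (f X) = - X + \<omega>\<^sub>1 X *\<^sub>R \<xi>\<^sub>1 + \<omega>\<^sub>2 X *\<^sub>R \<xi>\<^sub>2"
  shows "f (f (f X)) + f X = 0"
proof -
  have "f (f (f X)) = f (- X + \<omega>\<^sub>1 X *\<^sub>R \<xi>\<^sub>1 + \<omega>\<^sub>2 X *\<^sub>R \<xi>\<^sub>2)"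
    using assms(4)[of X] by (rule arg_cong)
  also have "\<dots> = - f X"
    using assms(1-3) by (simp add: linear_add linear_diff linear_neg linear_scale)
  finally show ?thesis by simp
qed

lemma framed_f_range_eq_common_kernel:
  assumes "linear f" "\<And>X. \<omega>\<^sub>1 (f X) = 0" "\<And>X. \<omega>\<^sub>2 (f X) = 0"
    and "\<And>X. f (f X) = - X + \<omega>\<^sub>1 X *\<^sub>R \<xi>\<^sub>1 + \<omega>\<^sub>2 X *\<^sub>R \<xi>\<^sub>2"
  shows "range f = {X. \<omega>\<^sub>1 X = 0 \<and> \<omega>\<^sub>2 X = 0}"
proof (intro set_eqI iffI)
  fix X assume "X \<in> {X. \<omega>\<^sub>1 X = 0 \<and> \<omega>\<^sub>2 X = 0}"
  then have "f (- f X) = X" using assms by (simp add: linear_neg)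
  then show "X \<in> range f" by (metis rangeI)
qed (use assms in auto)

lemma linear_functional_eq_inner_adjoint:
  fixes \<omega> :: "'a::euclidean_space \<Rightarrow> real"
  assumes "linear \<omega>"
  shows "\<omega> X = adjoint \<omega> 1 \<bullet> X"
  using adjoint_works[OF assms, of X 1] by (simp add: inner_commute)

lemma dim_common_kernel_dual_pair:
  fixes \<omega>\<^sub>1 \<omega>\<^sub>2 :: "'a::euclidean_space \<Rightarrow> real"
  assumes "linear \<omega>\<^sub>1" "linear \<omega>\<^sub>2"
    and "\<omega>\<^sub>1 \<xi>\<^sub>1 = 1" "\<omega>\<^sub>1 \<xi>\<^sub>2 = 0" "\<omega>\<^sub>2 \<xi>\<^sub>1 = 0" "\<omega>\<^sub>2 \<xi>\<^sub>2 = 1"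
  shows "dim {X. \<omega>\<^sub>1 X = 0 \<and> \<omega>\<^sub>2 X = 0} = DIM('a) - 2"
proof -
  define u v where "u = adjoint \<omega>\<^sub>1 1" and "v = adjoint \<omega>\<^sub>2 1"
  have \<omega>_inner: "\<omega>\<^sub>1 X = u \<bullet> X" "\<omega>\<^sub>2 X = v \<bullet> X" for X
    unfolding u_def v_def using assms(1,2) by (simp_all add: linear_functional_eq_inner_adjoint)
  have "u \<noteq> v" using assms(3,5) \<omega>_inner by auto
  have "u \<notin> span {v}"
  proof
    assume "u \<in> span {v}"
    then obtain k where "u = k *\<^sub>R v" by (auto simp: span_singleton)
    then show False using assms(3,5) \<omega>_inner by simp
  qed
  moreover have "v \<noteq> 0" using assms(6) \<omega>_inner by auto
  ultimately have "dim (span {u, v}) = 2"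
    using \<open>u \<noteq> v\<close> by (simp add: dim_eq_card_independent independent_insert)
  have kernel: "{X. \<omega>\<^sub>1 X = 0 \<and> \<omega>\<^sub>2 X = 0} = {X \<in> UNIV. \<forall>w \<in> span {u, v}. orthogonal w X}"
  proof (intro set_eqI iffI)
    fix X assume X: "X \<in> {X. \<omega>\<^sub>1 X = 0 \<and> \<omega>\<^sub>2 X = 0}"
    have "orthogonal X w" if "w \<in> span {u, v}" for w
      by (rule orthogonal_to_span[OF that]) (use X in \<open>auto simp: \<omega>_inner orthogonal_def inner_commute\<close>)
    then show "X \<in> {X \<in> UNIV. \<forall>w \<in> span {u, v}. orthogonal w X}"
      by (simp add: orthogonal_commute)
  qed (auto simp: \<omega>_inner orthogonal_def span_base)
  have "dim {X \<in> UNIV. \<forall>w \<in> span {u, v}. orthogonal w X} + dim (span {u, v}) = dim (UNIV :: 'a set)"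
    by (rule dim_subspace_orthogonal_to_vectors) (auto simp: subspace_span)
  then show ?thesis
    using kernel \<open>dim (span {u, v}) = 2\<close> by simp
qed

declare One_nat_def [simp del] \<comment> \<open>keeps the frame index \<open>1\<close> from turning into \<open>Suc 0\<close>\<close>

lemma matrix_inv_mult_cancel:
  fixes A :: "real ^ 'n ^ 'n"
  assumes "invertible A"
  shows "matrix_inv A *v (A *v v) = v" "A *v (matrix_inv A *v v) = v"
proof -
  have "A ** matrix_inv A = mat 1 \<and> matrix_inv A ** A = mat 1"
    using assms unfolding invertible_def matrix_inv_def by (rule someI_ex)
  then show "matrix_inv A *v (A *v v) = v" "A *v (matrix_inv A *v v) = v"
    by (simp_all add: matrix_vector_mul_assoc)
qed

lemma riem_metric_invertible:
  assumes "riem_metric g"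
  shows "invertible g"
proof -
  have "x = 0" if "g *v x = 0" for x
    using assms that unfolding riem_metric_def by force
  then show ?thesis
    using matrix_left_invertible_ker invertible_left_inverse by blast
qed

lemmas riem_metric_inv_cancel = matrix_inv_mult_cancel[OF riem_metric_invertible]

lemma riem_metric_inner_commute:
  assumes "riem_metric g"
  shows "u \<bullet> (g *v w) = (g *v u) \<bullet> w"
proof -
  have "transpose g = g" using assms unfolding riem_metric_def by simp
  then have "w \<bullet> (g *v u) = (g *v w) \<bullet> u"
    by (metis dot_lmul_matrix transpose_matrix_vector)
  then show ?thesis by (simp add: inner_commute)
qed

lemma riem_metric_inner_commute_inv:
  assumes "riem_metric g"
  shows "u \<bullet> (matrix_inv g *v w) = (matrix_inv g *v u) \<bullet> w"
  using riem_metric_inner_commute[OF assms, of "matrix_inv g *v u" "matrix_inv g *v w"]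
  by (simp add: riem_metric_inv_cancel[OF assms])

lemma matrix_vector_mult_neg: "(A :: real ^ 'n ^ 'm) *v (- x) = - (A *v x)"
  by (simp add: matrix_vector_mul_linear linear_neg)

lemma linear_omega: "linear (omega g y p a)"
  by (rule linearI)
    (auto simp: omega_def inner_add_left add_divide_distrib diff_divide_distrib algebra_simps)

lemma linear_phi: "linear (phi g)"
  by (rule linearI)
    (auto simp: phi_def matrix_vector_right_distrib matrix_vector_mult_scaleR algebra_simps)

lemma linear_fstr: "linear (fstr g y p)"
  by (rule linearI)
    (simp_all add: fstr_def linear_add[OF linear_phi] linear_add[OF linear_omega]
      linear_scale[OF linear_phi] linear_scale[OF linear_omega] algebra_simps)

lemma phi_phi: "riem_metric g \<Longrightarrow> phi g (phi g X) = - X"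
  by (cases X) (simp add: phi_def matrix_vector_mult_neg riem_metric_inv_cancel)

lemma phi_xi:
  assumes "riem_metric g"
  shows "phi g (xi g y p 1) = - xi g y p 2" "phi g (xi g y p 2) = xi g y p 1"
  using assms
  by (simp_all add: phi_def xi_def matrix_vector_mult_scaleR matrix_vector_mult_neg riem_metric_inv_cancel)

lemma omega_phi:
  assumes "riem_metric g"
  shows "omega g y p 1 (phi g X) = omega g y p 2 X" "omega g y p 2 (phi g X) = - omega g y p 1 X"
proof -
  obtain a b where X: "X = (a, b)" by fastforce
  note inv_cancel = riem_metric_inv_cancel[OF assms]
  have "(matrix_inv g *v b) \<bullet> p = b \<bullet> (matrix_inv g *v p)" "(g *v a) \<bullet> y = a \<bullet> (g *v y)"
    using riem_metric_inner_commute_inv[OF assms, of b p] riem_metric_inner_commute[OF assms, of a y]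
    by simp_all
  then show "omega g y p 1 (phi g X) = omega g y p 2 X"
    by (simp add: X phi_def omega_def)
  have "(matrix_inv g *v b) \<bullet> (g *v y) = b \<bullet> y" "(g *v a) \<bullet> (matrix_inv g *v p) = a \<bullet> p"
    using riem_metric_inner_commute_inv[OF assms, of b "g *v y"]
      riem_metric_inner_commute[OF assms, of a "matrix_inv g *v p"]
    by (simp_all add: inv_cancel)
  then show "omega g y p 2 (phi g X) = - omega g y p 1 X"
    by (simp add: X phi_def omega_def inner_commute[of y b] diff_divide_distrib)
qed

lemma omega_xi:
  assumes "riem_metric g" "Fsq g y + Ksq g p > 0"
  shows "omega g y p 1 (xi g y p 1) = 1" "omega g y p 1 (xi g y p 2) = 0"
    "omega g y p 2 (xi g y p 1) = 0" "omega g y p 2 (xi g y p 2) = 1"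
proof -
  have nrm: "nrm g y p * nrm g y p = Fsq g y + Ksq g p" "nrm g y p > 0"
    using assms(2) unfolding nrm_def by simp_all
  then show "omega g y p 1 (xi g y p 1) = 1" "omega g y p 2 (xi g y p 2) = 1"
    using assms(2) by (simp_all add: omega_def xi_def Fsq_def Ksq_def field_simps inner_commute)
  show "omega g y p 1 (xi g y p 2) = 0" "omega g y p 2 (xi g y p 1) = 0"
    using nrm riem_metric_inner_commute_inv[OF assms(1)] by (simp_all add: omega_def xi_def inner_commute)
qed

lemma fstr_xi:
  assumes "riem_metric g" "Fsq g y + Ksq g p > 0"
  shows "fstr g y p (xi g y p 1) = 0" "fstr g y p (xi g y p 2) = 0"
  by (simp_all add: fstr_def omega_xi[OF assms] phi_xi[OF assms(1)])

lemma omega_fstr: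
  assumes "riem_metric g" "Fsq g y + Ksq g p > 0"
  shows "omega g y p 1 (fstr g y p X) = 0" "omega g y p 2 (fstr g y p X) = 0"
  by (simp_all add: fstr_def linear_add[OF linear_omega] linear_diff[OF linear_omega]
      linear_scale[OF linear_omega] omega_xi[OF assms] omega_phi[OF assms(1)])

lemma fstr_fstr:
  assumes "riem_metric g" "Fsq g y + Ksq g p > 0"
  shows "fstr g y p (fstr g y p X)
           = - X + omega g y p 1 X *\<^sub>R xi g y p 1 + omega g y p 2 X *\<^sub>R xi g y p 2"
proof -
  have "fstr g y p (fstr g y p X) = phi g (fstr g y p X)"
    by (simp add: fstr_def[of g y p "fstr g y p X"] omega_fstr[OF assms])
  also have "\<dots> = - X + omega g y p 1 X *\<^sub>R xi g y p 1 + omega g y p 2 X *\<^sub>R xi g y p 2"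
    by (simp add: fstr_def linear_add[OF linear_phi] linear_diff[OF linear_phi]
        linear_scale[OF linear_phi] phi_phi[OF assms(1)] phi_xi[OF assms(1)] algebra_simps)
  finally show ?thesis .
qed

theorem theorem5p1:
  fixes g :: "real ^ 'n ^ 'n" and y p :: "real ^ 'n"
  assumes "riem_metric g"
    and "Fsq g y + Ksq g p > 0"
  shows "(\<forall>a\<in>{1,2}. \<forall>b\<in>{1,2}. omega g y p a (xi g y p b) = (if a = b then 1 else 0))
    \<and> (\<forall>a\<in>{1,2}. fstr g y p (xi g y p a) = 0)
    \<and> (\<forall>a\<in>{1,2}. \<forall>X. omega g y p a (fstr g y p X) = 0)
    \<and> (\<forall>X. fstr g y p (fstr g y p X)
           = - X + omega g y p 1 X *\<^sub>R xi g y p 1 + omega g y p 2 X *\<^sub>R xi g y p 2)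
    \<and> dim (range (fstr g y p)) = 2 * CARD('n) - 2
    \<and> (\<forall>X. fstr g y p (fstr g y p (fstr g y p X)) + fstr g y p X = 0)"
proof -
  have "range (fstr g y p) = {X. omega g y p 1 X = 0 \<and> omega g y p 2 X = 0}"
    by (rule framed_f_range_eq_common_kernel[OF linear_fstr omega_fstr[OF assms] fstr_fstr[OF assms]])
  also have "dim \<dots> = DIM('n vert) - 2"
    by (rule dim_common_kernel_dual_pair[OF linear_omega linear_omega omega_xi[OF assms]])
  finally have "dim (range (fstr g y p)) = 2 * CARD('n) - 2"
    by simp
  moreover have "fstr g y p (fstr g y p (fstr g y p X)) + fstr g y p X = 0" for X
    by (rule framed_f_cube[OF linear_fstr fstr_xi[OF assms] fstr_fstr[OF assms]])
  ultimately show ?thesis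
    using omega_xi[OF assms] fstr_xi[OF assms] omega_fstr[OF assms] fstr_fstr[OF assms]
    by simp
qed

end
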